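(* Let $t\in\mathbb{R}$, $\mu>0$, $\sigma>0$, $\lambda>0$ with $\lambda\ge(\mu-t)_-$. Let $\mathcal{L}_{\lambda}(\mu,\sigma)$ be the set of probability distributions $F$ on $\mathbb{R}$ with $\mathbb{E}^F[X]=\mu$, $\mathbb{E}^F[X^2]=\mu^2+\sigma^2$ and $\mathbb{E}^F[(X-t)_-]\le\lambda$ (for $X\sim F$), and let $\mathcal{L}^+_{\lambda}(\mu,\sigma)=\{F\in\mathcal{L}_{\lambda}(\mu,\sigma): F(0-)=0\}$. If either $\lambda>(\mu-t)_-$, or $\lambda=(\mu-t)_-$ and $\sigma^2\le\mu(t-\mu)$, then \[ \sup_{F \in \mathcal{L}^+_{\lambda}(\mu, \sigma)} \mathbb{E}^{F}[(X-t)_{+}^2] = \sup_{F \in \mathcal{L}_{\lambda}(\mu, \sigma)} \mathbb{E}^{F}[(X-t)_{+}^2] = \begin{cases} \sigma^2 + (\mu-t)_+^2, & \lambda > (\mu-t)_-, \\ 0, & \lambda=(\mu-t)_-,~\sigma^2 \le \mu (t-\mu). \end{cases} \]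
   Context: For $x\in\mathbb{R}$, $(x)_+=\max\{x,0\}$ and $(x)_-=\max\{-x,0\}$. $F(0-)=\mathbb{P}(X<0)$ under $F$, so $F(0-)=0$ means $F$ is the distribution of a non-negative random variable. $\mathbb{E}^F$ denotes expectation when $X$ has distribution $F$. *)

theory Defs
  imports "HOL-Probability.Probability"
begin

definition pos_part :: "real \<Rightarrow> real" where
  "pos_part x = max x 0"

definition neg_part :: "real \<Rightarrow> real" where
  "neg_part x = max (- x) 0"

definition Lset :: "real \<Rightarrow> real \<Rightarrow> real \<Rightarrow> real \<Rightarrow> real measure set" where
  "Lset t mu sig lam = {F. prob_space F \<and> sets F = sets borel \<and>
      integrable F (\<lambda>x. x) \<and> integrable F (\<lambda>x. x ^ 2) \<and>
      (\<integral>x. x \<partial>F) = mu \<and> (\<integral>x. x ^ 2 \<partial>F) = mu ^ 2 + sig ^ 2 \<and>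
      (\<integral>x. neg_part (x - t) \<partial>F) \<le> lam}"

definition Lset_plus :: "real \<Rightarrow> real \<Rightarrow> real \<Rightarrow> real \<Rightarrow> real measure set" where
  "Lset_plus t mu sig lam = {F \<in> Lset t mu sig lam. measure F {..<0} = 0}"

end

theory Submission
  imports Defs "HOL-Real_Asymp.Real_Asymp"
begin

(* With c = (mu - t)_- >= 0 we have (x - t)_+^2 <= (x - t + c)^2 pointwise, and the right-hand side
   has expectation sig^2 + (mu - t + c)^2 = sig^2 + (mu - t)_+^2 under every law with the given
   mean and variance. If lam > (mu - t)_-, the bound is approached by the two-point laws with mass
   sig^2 / (x^2 + sig^2) at mu + x and the rest at mu - sig^2 / x: they are nonnegative for large x,
   and as x tends to infinity E (X - t)_- tends to (mu - t)_- < lam while E (X - t)_+^2 tends to the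
   bound. If lam = (mu - t)_- = t - mu, then E (X - t)_+ = mu - t + E (X - t)_- <= 0, so X <= t almost
   surely; the value 0 is attained by the law on {0, mu + sig^2 / mu}, whose upper atom lies below t
   precisely because sig^2 <= mu (t - mu). *)

lemma pos_part_eq_add_neg_part: "pos_part x = x + neg_part x"
  unfolding pos_part_def neg_part_def by simp

lemma pos_part_sq_le_sq_add: "0 \<le> c \<Longrightarrow> pos_part x ^ 2 \<le> (x + c) ^ 2"
  unfolding pos_part_def by (cases "0 \<le> x") (auto intro!: power_mono)

lemma tendsto_pos_part [tendsto_intros]: "(f \<longlongrightarrow> a) F \<Longrightarrow> ((\<lambda>x. pos_part (f x)) \<longlongrightarrow> pos_part a) F"
  unfolding pos_part_def by (intro tendsto_intros)

lemma tendsto_neg_part [tendsto_intros]: "(f \<longlongrightarrow> a) F \<Longrightarrow> ((\<lambda>x. neg_part (f x)) \<longlongrightarrow> neg_part a) F"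
  unfolding neg_part_def by (intro tendsto_intros)

lemma borel_measurable_pos_part [measurable]:
  "f \<in> borel_measurable M \<Longrightarrow> (\<lambda>x. pos_part (f x)) \<in> borel_measurable M"
  unfolding pos_part_def by measurable

lemma borel_measurable_neg_part [measurable]:
  "f \<in> borel_measurable M \<Longrightarrow> (\<lambda>x. neg_part (f x)) \<in> borel_measurable M"
  unfolding neg_part_def by measurable

context real_distribution
begin

lemma integral_square_shift:
  assumes "integrable M (\<lambda>x. x)" "integrable M (\<lambda>x. x ^ 2)"
  shows "integrable M (\<lambda>x. (x - a) ^ 2)"
    and "(\<integral>x. (x - a) ^ 2 \<partial>M) = (\<integral>x. x ^ 2 \<partial>M) - 2 * a * (\<integral>x. x \<partial>M) + a ^ 2"
proof -
  have expand: "(\<lambda>x. (x - a) ^ 2) = (\<lambda>x. x ^ 2 - 2 * a * x + a ^ 2)"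
    by (simp add: power2_diff algebra_simps)
  show "integrable M (\<lambda>x. (x - a) ^ 2)"
    unfolding expand using assms by simp
  show "(\<integral>x. (x - a) ^ 2 \<partial>M) = (\<integral>x. x ^ 2 \<partial>M) - 2 * a * (\<integral>x. x \<partial>M) + a ^ 2"
    unfolding expand using assms prob_space by simp
qed

lemma integral_pos_part_sq_le:
  assumes "integrable M (\<lambda>x. x)" "integrable M (\<lambda>x. x ^ 2)" and "0 \<le> c"
  shows "(\<integral>x. pos_part (x - t) ^ 2 \<partial>M) \<le> (\<integral>x. (x - (t - c)) ^ 2 \<partial>M)"
proof -
  have le: "pos_part (x - t) ^ 2 \<le> (x - (t - c)) ^ 2" for x
    using pos_part_sq_le_sq_add[OF \<open>0 \<le> c\<close>, of "x - t"] by (simp add: algebra_simps)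
  note square_int = integral_square_shift(1)[OF assms(1,2), of "t - c"]
  have "integrable M (\<lambda>x. pos_part (x - t) ^ 2)"
    by (rule Bochner_Integration.integrable_bound[OF square_int])
      (use le in \<open>auto simp: pos_part_def\<close>)
  then show ?thesis
    by (rule integral_mono[OF _ square_int le])
qed

lemma integral_pos_part_eq:
  assumes "integrable M (\<lambda>x. x)"
  shows "integrable M (\<lambda>x. pos_part (x - t))"
    and "(\<integral>x. pos_part (x - t) \<partial>M) = (\<integral>x. x \<partial>M) - t + (\<integral>x. neg_part (x - t) \<partial>M)"
proof -
  have "integrable M (\<lambda>x. \<bar>x\<bar> + \<bar>t\<bar>)"
    using assms by simp
  then have neg_int: "integrable M (\<lambda>x. neg_part (x - t))"
    by (rule Bochner_Integration.integrable_bound) (auto simp: neg_part_def)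
  show "integrable M (\<lambda>x. pos_part (x - t))"
    unfolding pos_part_eq_add_neg_part using assms neg_int by simp
  show "(\<integral>x. pos_part (x - t) \<partial>M) = (\<integral>x. x \<partial>M) - t + (\<integral>x. neg_part (x - t) \<partial>M)"
    unfolding pos_part_eq_add_neg_part using assms neg_int prob_space by simp
qed

lemma integral_pos_part_sq_eq_0:
  assumes "integrable M (\<lambda>x. x)" and "(\<integral>x. neg_part (x - t) \<partial>M) \<le> t - (\<integral>x. x \<partial>M)"
  shows "(\<integral>x. pos_part (x - t) ^ 2 \<partial>M) = 0"
proof -
  have nonneg: "0 \<le> pos_part (x - t)" for x
    by (simp add: pos_part_def)
  have "(\<integral>x. pos_part (x - t) \<partial>M) \<le> 0"
    using integral_pos_part_eq(2)[OF assms(1)] assms(2) by simp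
  moreover have "0 \<le> (\<integral>x. pos_part (x - t) \<partial>M)"
    by (rule integral_nonneg_AE) (simp add: nonneg)
  ultimately have "(\<integral>x. pos_part (x - t) \<partial>M) = 0"
    by simp
  then have "AE x in M. pos_part (x - t) = 0"
    using integral_nonneg_eq_0_iff_AE[OF integral_pos_part_eq(1)[OF assms(1)]] nonneg by simp
  then have "AE x in M. pos_part (x - t) ^ 2 = 0"
    by eventually_elim simp
  then show ?thesis
    by (rule integral_eq_zero_AE)
qed

end

lemma Lset_real_distribution: "F \<in> Lset t mu sig lam \<Longrightarrow> real_distribution F"
  unfolding Lset_def real_distribution_def real_distribution_axioms_def by simp

lemma Lset_integral_pos_part_sq_le:
  assumes F: "F \<in> Lset t mu sig lam"
  shows "(\<integral>x. pos_part (x - t) ^ 2 \<partial>F) \<le> sig ^ 2 + pos_part (mu - t) ^ 2"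
proof -
  interpret real_distribution F
    using F by (rule Lset_real_distribution)
  have int: "integrable F (\<lambda>x. x)" "integrable F (\<lambda>x. x ^ 2)"
    and moments: "(\<integral>x. x \<partial>F) = mu" "(\<integral>x. x ^ 2 \<partial>F) = mu ^ 2 + sig ^ 2"
    using F by (auto simp: Lset_def)
  define c where "c = neg_part (mu - t)"
  have "c \<ge> 0" and "mu - t + c = pos_part (mu - t)"
    unfolding c_def pos_part_def neg_part_def by auto
  have "(\<integral>x. pos_part (x - t) ^ 2 \<partial>F) \<le> (\<integral>x. (x - (t - c)) ^ 2 \<partial>F)"
    using integral_pos_part_sq_le[OF int \<open>c \<ge> 0\<close>] .
  also have "\<dots> = sig ^ 2 + (mu - t + c) ^ 2"
    unfolding integral_square_shift(2)[OF int] moments by (simp add: power2_diff power2_sum algebra_simps)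
  finally show ?thesis
    unfolding \<open>mu - t + c = pos_part (mu - t)\<close> .
qed

lemma Lset_integral_pos_part_sq_eq_0:
  assumes F: "F \<in> Lset t mu sig lam" and "lam \<le> t - mu"
  shows "(\<integral>x. pos_part (x - t) ^ 2 \<partial>F) = 0"
proof -
  interpret real_distribution F
    using F by (rule Lset_real_distribution)
  show ?thesis
    by (rule integral_pos_part_sq_eq_0) (use F assms(2) in \<open>auto simp: Lset_def\<close>)
qed

definition two_point :: "real \<Rightarrow> real \<Rightarrow> real \<Rightarrow> real measure" where
  "two_point p a b = distr (measure_pmf (bernoulli_pmf p)) borel (\<lambda>c. if c then a else b)"

lemma real_distribution_two_point:
  assumes "0 \<le> p" "p \<le> 1"
  shows "real_distribution (two_point p a b)"
  unfolding real_distribution_def real_distribution_axioms_def two_point_def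
  by (auto intro: prob_space.prob_space_distr measure_pmf.prob_space_axioms)

lemma integral_two_point:
  fixes g :: "real \<Rightarrow> real"
  assumes "0 \<le> p" "p \<le> 1" and [measurable]: "g \<in> borel_measurable borel"
  shows "integrable (two_point p a b) g"
    and "(\<integral>x. g x \<partial>two_point p a b) = p * g a + (1 - p) * g b"
  unfolding two_point_def using assms
  by (auto simp: integrable_distr_eq integral_distr intro!: integrable_measure_pmf_finite)

lemma measure_two_point:
  assumes "0 \<le> p" "p \<le> 1" and "S \<in> sets borel"
  shows "measure (two_point p a b) S = p * indicator S a + (1 - p) * indicator S b"
proof -
  interpret real_distribution "two_point p a b"
    using assms(1,2) by (rule real_distribution_two_point)
  show ?thesis
    using integral_two_point(2)[OF assms(1,2), of "indicator S" a b] assms(3) by simp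
qed

lemma two_point_in_Lset_plus:
  assumes p: "0 \<le> p" "p \<le> 1" and "0 \<le> a" "0 \<le> b"
    and "p * a + (1 - p) * b = mu" and "p * a ^ 2 + (1 - p) * b ^ 2 = mu ^ 2 + sig ^ 2"
    and "p * neg_part (a - t) + (1 - p) * neg_part (b - t) \<le> lam"
  shows "two_point p a b \<in> Lset_plus t mu sig lam"
proof -
  interpret real_distribution "two_point p a b"
    using p by (rule real_distribution_two_point)
  note two_point_neg = integral_two_point[OF p, of "\<lambda>x. neg_part (x - t)", simplified]
    and two_point_x = integral_two_point[OF p, of "\<lambda>x. x", simplified]
    and two_point_x2 = integral_two_point[OF p, of "\<lambda>x. x ^ 2", simplified]
  have "measure (two_point p a b) {..<0} = 0"
    using measure_two_point[OF p, of "{..<0}"] assms(3,4) by simp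
  moreover have "(\<integral>x. x \<partial>two_point p a b) = mu"
    using two_point_x(2) assms(5) by simp
  moreover have "(\<integral>x. x ^ 2 \<partial>two_point p a b) = mu ^ 2 + sig ^ 2"
    using two_point_x2(2) assms(6) by simp
  moreover have "(\<integral>x. neg_part (x - t) \<partial>two_point p a b) \<le> lam"
    using two_point_neg(2) assms(7) by simp
  ultimately show ?thesis
    using two_point_x(1) two_point_x2(1) prob_space_axioms by (simp add: Lset_plus_def Lset_def)
qed

lemma two_point_moments:
  fixes x s mu :: real
  assumes "0 < x" "0 < s"
  shows "s / (x ^ 2 + s) * (mu + x) + (1 - s / (x ^ 2 + s)) * (mu - s / x) = mu"
    and "s / (x ^ 2 + s) * (mu + x) ^ 2 + (1 - s / (x ^ 2 + s)) * (mu - s / x) ^ 2 = mu ^ 2 + s"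
proof -
  have "0 < x ^ 2 + s"
    using assms by (simp add: add_nonneg_pos)
  then have weights: "1 - s / (x ^ 2 + s) = x ^ 2 / (x ^ 2 + s)"
    by (simp add: field_simps)
  have "s * (mu + x) + x ^ 2 * (mu - s / x) = mu * (x ^ 2 + s)"
    using assms(1) by (simp add: field_simps power2_eq_square)
  with \<open>0 < x ^ 2 + s\<close> show "s / (x ^ 2 + s) * (mu + x) + (1 - s / (x ^ 2 + s)) * (mu - s / x) = mu"
    unfolding weights by (simp add: add_divide_distrib[symmetric])
  have "s * (mu + x) ^ 2 + x ^ 2 * (mu - s / x) ^ 2 = (mu ^ 2 + s) * (x ^ 2 + s)"
    using assms(1) by (simp add: field_simps power2_eq_square)
  with \<open>0 < x ^ 2 + s\<close> show "s / (x ^ 2 + s) * (mu + x) ^ 2 + (1 - s / (x ^ 2 + s)) * (mu - s / x) ^ 2 = mu ^ 2 + s"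
    unfolding weights by (simp add: add_divide_distrib[symmetric])
qed

lemma two_point_family_tendsto:
  fixes s mu t :: real
  assumes "0 < s"
  shows "((\<lambda>x. s / (x ^ 2 + s) * pos_part (mu + x - t) ^ 2
              + (1 - s / (x ^ 2 + s)) * pos_part (mu - s / x - t) ^ 2)
           \<longlongrightarrow> s + pos_part (mu - t) ^ 2) at_top"
    and "((\<lambda>x. s / (x ^ 2 + s) * neg_part (mu + x - t)
              + (1 - s / (x ^ 2 + s)) * neg_part (mu - s / x - t))
           \<longlongrightarrow> neg_part (mu - t)) at_top"
proof -
  define p where "p x = s / (x ^ 2 + s)" for x :: real
  define b where "b x = mu - s / x" for x :: real
  have p_lim: "(p \<longlongrightarrow> 0) at_top" and b_lim: "(b \<longlongrightarrow> mu) at_top"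
    unfolding p_def b_def by real_asymp+
  have "((\<lambda>x. p x * pos_part (mu + x - t) ^ 2) \<longlongrightarrow> s) at_top"
    unfolding p_def pos_part_def using assms by real_asymp
  moreover have "((\<lambda>x. (1 - p x) * pos_part (b x - t) ^ 2) \<longlongrightarrow> pos_part (mu - t) ^ 2) at_top"
    using p_lim b_lim by (auto intro!: tendsto_eq_intros)
  ultimately have "((\<lambda>x. p x * pos_part (mu + x - t) ^ 2 + (1 - p x) * pos_part (b x - t) ^ 2)
                     \<longlongrightarrow> s + pos_part (mu - t) ^ 2) at_top"
    by (rule tendsto_add)
  then show "((\<lambda>x. s / (x ^ 2 + s) * pos_part (mu + x - t) ^ 2
              + (1 - s / (x ^ 2 + s)) * pos_part (mu - s / x - t) ^ 2)
           \<longlongrightarrow> s + pos_part (mu - t) ^ 2) at_top"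
    by (simp only: p_def b_def)
  have "((\<lambda>x. p x * neg_part (mu + x - t)) \<longlongrightarrow> 0) at_top"
    unfolding p_def neg_part_def by real_asymp
  moreover have "((\<lambda>x. (1 - p x) * neg_part (b x - t)) \<longlongrightarrow> neg_part (mu - t)) at_top"
    using p_lim b_lim by (auto intro!: tendsto_eq_intros)
  ultimately have "((\<lambda>x. p x * neg_part (mu + x - t) + (1 - p x) * neg_part (b x - t))
                     \<longlongrightarrow> neg_part (mu - t)) at_top"
    using tendsto_add by fastforce
  then show "((\<lambda>x. s / (x ^ 2 + s) * neg_part (mu + x - t)
              + (1 - s / (x ^ 2 + s)) * neg_part (mu - s / x - t))
           \<longlongrightarrow> neg_part (mu - t)) at_top"
    by (simp only: p_def b_def)
qed

lemma SUP_Lset_plus_ge: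
  assumes "0 < mu" "0 < sig" "neg_part (mu - t) < lam"
  shows "ereal (sig ^ 2 + pos_part (mu - t) ^ 2)
           \<le> (SUP F \<in> Lset_plus t mu sig lam. ereal (\<integral>x. pos_part (x - t) ^ 2 \<partial>F))"
proof -
  define s where "s = sig ^ 2"
  define p where "p x = s / (x ^ 2 + s)" for x :: real
  define a where "a x = mu + x" for x :: real
  define b where "b x = mu - s / x" for x :: real
  define v where "v x = p x * pos_part (a x - t) ^ 2 + (1 - p x) * pos_part (b x - t) ^ 2" for x
  have "0 < s"
    using assms(2) by (simp add: s_def)
  note limits = two_point_family_tendsto[OF this, of mu t, folded p_def a_def b_def]
  have "eventually (\<lambda>x. p x * neg_part (a x - t) + (1 - p x) * neg_part (b x - t) < lam) at_top"
    using limits(2) assms(3) by (rule order_tendstoD)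
  moreover have "eventually (\<lambda>x. 0 < b x) at_top"
    unfolding b_def using assms(1) by real_asymp
  moreover have "eventually (\<lambda>x::real. 0 < x) at_top"
    by (rule eventually_gt_at_top)
  ultimately have "eventually (\<lambda>x. ereal (v x)
      \<le> (SUP F \<in> Lset_plus t mu sig lam. ereal (\<integral>x. pos_part (x - t) ^ 2 \<partial>F))) at_top"
  proof eventually_elim
    case (elim x)
    have "0 < x ^ 2 + s"
      using \<open>0 < s\<close> by (simp add: add_nonneg_pos)
    then have p: "0 \<le> p x" "p x \<le> 1"
      using \<open>0 < s\<close> by (simp_all add: p_def)
    have "two_point (p x) (a x) (b x) \<in> Lset_plus t mu sig lam"
      using elim assms(1) two_point_moments[OF \<open>0 < x\<close> \<open>0 < s\<close>, of mu] p
      by (intro two_point_in_Lset_plus) (auto simp: p_def a_def b_def s_def)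
    moreover have "(\<integral>y. pos_part (y - t) ^ 2 \<partial>two_point (p x) (a x) (b x)) = v x"
      using integral_two_point(2)[OF p, of "\<lambda>y. pos_part (y - t) ^ 2"] by (simp add: v_def)
    ultimately show ?case
      by (metis (no_types, lifting) SUP_upper)
  qed
  moreover have "(v \<longlongrightarrow> sig ^ 2 + pos_part (mu - t) ^ 2) at_top"
    using limits(1) unfolding v_def s_def .
  ultimately show ?thesis
    by (intro tendsto_le[OF trivial_limit_at_top_linorder tendsto_const]) auto
qed

lemma Lset_plus_attains_0:
  assumes "0 < mu" "sig ^ 2 \<le> mu * (t - mu)" "t - mu \<le> lam"
  shows "\<exists>F \<in> Lset_plus t mu sig lam. (\<integral>x. pos_part (x - t) ^ 2 \<partial>F) = 0"
proof -
  define c where "c = mu + sig ^ 2 / mu"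
  have "mu \<le> c" "c \<le> t"
    using assms(1,2) by (simp_all add: c_def field_simps)
  define p where "p = mu / c"
  have p: "0 \<le> p" "p \<le> 1"
    using assms(1) \<open>mu \<le> c\<close> by (auto simp: p_def)
  have mean: "p * c + (1 - p) * 0 = mu"
    using assms(1) \<open>mu \<le> c\<close> by (simp add: p_def)
  have "p * c ^ 2 = mu * c"
    using assms(1) \<open>mu \<le> c\<close> by (simp add: p_def power2_eq_square)
  also have "\<dots> = mu ^ 2 + sig ^ 2"
    using assms(1) by (simp add: c_def field_simps power2_eq_square)
  finally have "p * c ^ 2 + (1 - p) * 0 ^ 2 = mu ^ 2 + sig ^ 2"
    by simp
  moreover have "p * neg_part (c - t) + (1 - p) * neg_part (0 - t) = t - mu"
    using mean \<open>mu \<le> c\<close> \<open>c \<le> t\<close> assms(1) by (simp add: neg_part_def algebra_simps)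
  ultimately have "two_point p c 0 \<in> Lset_plus t mu sig lam"
    using p mean \<open>mu \<le> c\<close> assms(1,3) by (intro two_point_in_Lset_plus) auto
  moreover have "(\<integral>x. pos_part (x - t) ^ 2 \<partial>two_point p c 0) = 0"
    using integral_two_point(2)[OF p, of "\<lambda>x. pos_part (x - t) ^ 2"] \<open>c \<le> t\<close> \<open>mu \<le> c\<close> assms(1)
    by (simp add: pos_part_def)
  ultimately show ?thesis
    by blast
qed

theorem corollary1:
  fixes t mu sig lam :: real
  assumes "mu > 0" and "sig > 0" and "lam > 0" and "lam \<ge> neg_part (mu - t)"
    and "lam > neg_part (mu - t) \<or> (lam = neg_part (mu - t) \<and> sig ^ 2 \<le> mu * (t - mu))"
  shows "(SUP F \<in> Lset_plus t mu sig lam. ereal (\<integral>x. (pos_part (x - t)) ^ 2 \<partial>F))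
           = (SUP F \<in> Lset t mu sig lam. ereal (\<integral>x. (pos_part (x - t)) ^ 2 \<partial>F))
       \<and> (SUP F \<in> Lset t mu sig lam. ereal (\<integral>x. (pos_part (x - t)) ^ 2 \<partial>F))
           = ereal (if lam > neg_part (mu - t) then sig ^ 2 + (pos_part (mu - t)) ^ 2 else 0)"
proof -
  let ?V = "\<lambda>F. ereal (\<integral>x. (pos_part (x - t)) ^ 2 \<partial>F)"
  define T where "T = (if lam > neg_part (mu - t) then sig ^ 2 + (pos_part (mu - t)) ^ 2 else 0)"
  have plus_le: "(SUP F \<in> Lset_plus t mu sig lam. ?V F) \<le> (SUP F \<in> Lset t mu sig lam. ?V F)"
    by (rule SUP_subset_mono) (auto simp: Lset_plus_def)
  have "(SUP F \<in> Lset t mu sig lam. ?V F) \<le> ereal T \<and> ereal T \<le> (SUP F \<in> Lset_plus t mu sig lam. ?V F)"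
  proof (cases "lam > neg_part (mu - t)")
    case True
    have "(SUP F \<in> Lset t mu sig lam. ?V F) \<le> ereal T"
      by (rule SUP_least) (use Lset_integral_pos_part_sq_le True in \<open>simp add: T_def\<close>)
    with True show ?thesis
      using SUP_Lset_plus_ge[OF assms(1,2) True] by (simp add: T_def)
  next
    case False
    with assms(3,5) have "lam = t - mu" and "sig ^ 2 \<le> mu * (t - mu)"
      by (auto simp: neg_part_def split: if_splits)
    have "(SUP F \<in> Lset t mu sig lam. ?V F) \<le> ereal T"
      by (rule SUP_least) (use Lset_integral_pos_part_sq_eq_0 False \<open>lam = t - mu\<close> in \<open>simp add: T_def\<close>)
    moreover have "\<exists>F \<in> Lset_plus t mu sig lam. (\<integral>x. pos_part (x - t) ^ 2 \<partial>F) = 0"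
      using \<open>lam = t - mu\<close> \<open>sig ^ 2 \<le> mu * (t - mu)\<close> by (intro Lset_plus_attains_0[OF assms(1)]) auto
    then have "ereal T \<le> (SUP F \<in> Lset_plus t mu sig lam. ?V F)"
      using False by (auto simp: T_def intro: SUP_upper2)
    ultimately show ?thesis
      by blast
  qed
  with plus_le show ?thesis
    unfolding T_def[symmetric] by (meson antisym order_trans)
qed

end
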